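(* Let $\sigma_a,\sigma_b$ be reasonable strategies of player $0$ in the escape arena $\mathcal{A}_\bot$ with $\sigma_a\subseteq\sigma_b$. Then $\mathcal{V}_{\sigma_a}\preceq\mathcal{V}_{\sigma_b}$, i.e. $\mathcal{V}_{\sigma_a}(s)\preceq\mathcal{V}_{\sigma_b}(s)$ for all vertices $s$.
   Context: Parity game arena: $\mathcal{A}=(V,E,o,c)$ with $V$ finite, $E\subseteq V\times V$, every vertex has a successor, owner map $o:V\to\{0,1\}$, colouring $c:V\to\{0,\dots,d-1\}$; $V_i=o^{-1}(i)$. An infinite vertex sequence is won by player $0$ iff the largest colour occurring infinitely often is even. A cycle is $i$-dominated if its largest colour has parity $i$. Escape arena $\mathcal{A}_\bot$: vertices $V\cup\{\bot\}$, edges $E\cup(V_0\times\{\bot\})$, $\bot$ owned by player $0$ with no outgoing edges. $E_0$ = edges of $\mathcal{A}_\bot$ leaving $V_0$, $E_1=E\cap(V_1\times V)$. A strategy of player $i$ is a set $\sigma\subseteq E_i$ with $s\sigma\neq\emptyset$ for all $s\in V_i$. $\mathcal{A}_\bot|_{\sigma,\tau}$ has edges $\sigma\cup\tau$, $\mathcal{A}_\bot|_\sigma$ has edges $\sigma\cup E_1$; plays are maximal paths. Colour profiles $\mathcal{P}=\mathbb{Z}^d\cup\{-\infty,\infty\}$, $\text{\o}$ zero vector; $\wp(s)$ unit vector at coordinate $c(s)$; for a finite path the sum over vertices in $V$; infinite play: $\infty$ if won by player $0$, else $-\infty$. Order $\prec$: $-\infty$ least, $\infty$ greatest; for distinct $p,p'\in\mathbb{Z}^d$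 with $k$ the largest differing index, $p\prec p'$ iff ($k$ even, $p_k<p'_k$) or ($k$ odd, $p_k>p'_k$). Valuation: $\mathcal{V}_\sigma(\bot)=\text{\o}$, $\mathcal{V}_\sigma(s)=\min^\prec_\tau\max^\prec\{\wp(\pi)\mid\pi$ a play in $\mathcal{A}_\bot|_{\sigma,\tau}$ from $s\}$, min over player-$1$ strategies $\tau$. $\sigma$ is reasonable if $\mathcal{A}_\bot|_\sigma$ has no $1$-dominated cycle. *)

theory Defs
  imports Main "HOL-Library.Poly_Mapping"
begin

text \<open>Parity game arena (V, E, owner, c) with colours in {0..<d}.
  The escape arena uses vertex type 'v option; None plays the role of the escape vertex bot.\<close>

definition arena :: "'v set \<Rightarrow> ('v \<times> 'v) set \<Rightarrow> ('v \<Rightarrow> nat) \<Rightarrow> ('v \<Rightarrow> nat) \<Rightarrow> nat \<Rightarrow> bool" where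
  "arena V E owner c d \<longleftrightarrow> finite V \<and> E \<subseteq> V \<times> V \<and> (\<forall>v\<in>V. \<exists>w. (v, w) \<in> E)
     \<and> (\<forall>v\<in>V. owner v \<in> {0, 1}) \<and> (\<forall>v\<in>V. c v < d)"

definition escE :: "'v set \<Rightarrow> ('v \<times> 'v) set \<Rightarrow> ('v \<Rightarrow> nat) \<Rightarrow> ('v option \<times> 'v option) set" where
  "escE V E owner = {(Some u, Some v) | u v. (u, v) \<in> E} \<union> {(Some u, None) | u. u \<in> V \<and> owner u = 0}"

definition E0 :: "'v set \<Rightarrow> ('v \<times> 'v) set \<Rightarrow> ('v \<Rightarrow> nat) \<Rightarrow> ('v option \<times> 'v option) set" where
  "E0 V E owner = {(x, y) \<in> escE V E owner. \<exists>u. x = Some u \<and> u \<in> V \<and> owner u = 0}"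

definition E1 :: "'v set \<Rightarrow> ('v \<times> 'v) set \<Rightarrow> ('v \<Rightarrow> nat) \<Rightarrow> ('v option \<times> 'v option) set" where
  "E1 V E owner = {(Some u, Some v) | u v. (u, v) \<in> E \<and> u \<in> V \<and> owner u = 1}"

definition strategy0 :: "'v set \<Rightarrow> ('v \<times> 'v) set \<Rightarrow> ('v \<Rightarrow> nat) \<Rightarrow> ('v option \<times> 'v option) set \<Rightarrow> bool" where
  "strategy0 V E owner \<sigma> \<longleftrightarrow> \<sigma> \<subseteq> E0 V E owner \<and> (\<forall>s\<in>V. owner s = 0 \<longrightarrow> (\<exists>t. (Some s, t) \<in> \<sigma>))"

definition strategy1 :: "'v set \<Rightarrow> ('v \<times> 'v) set \<Rightarrow> ('v \<Rightarrow> nat) \<Rightarrow> ('v option \<times> 'v option) set \<Rightarrow> bool" where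
  "strategy1 V E owner \<tau> \<longleftrightarrow> \<tau> \<subseteq> E1 V E owner \<and> (\<forall>s\<in>V. owner s = 1 \<longrightarrow> (\<exists>t. (Some s, t) \<in> \<tau>))"

definition fin_plays :: "('a \<times> 'a) set \<Rightarrow> 'a \<Rightarrow> 'a list set" where
  "fin_plays F s = {xs. xs \<noteq> [] \<and> hd xs = s \<and> (\<forall>i. Suc i < length xs \<longrightarrow> (xs ! i, xs ! Suc i) \<in> F)
                        \<and> (\<forall>y. (last xs, y) \<notin> F)}"

definition inf_plays :: "('a \<times> 'a) set \<Rightarrow> 'a \<Rightarrow> (nat \<Rightarrow> 'a) set" where
  "inf_plays F s = {f. f 0 = s \<and> (\<forall>i. (f i, f (Suc i)) \<in> F)}"

text \<open>Colour profiles: Z^d (as finitely supported nat-indexed integer vectors) plus -inf, +inf.\<close>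
datatype prof = NegInf | Fin "nat \<Rightarrow>\<^sub>0 int" | PosInf

fun prof_less :: "prof \<Rightarrow> prof \<Rightarrow> bool" where
  "prof_less NegInf q = (q \<noteq> NegInf)"
| "prof_less PosInf q = False"
| "prof_less (Fin p) NegInf = False"
| "prof_less (Fin p) PosInf = True"
| "prof_less (Fin p) (Fin q) = (p \<noteq> q \<and>
     (let k = Max {k. Poly_Mapping.lookup p k \<noteq> Poly_Mapping.lookup q k} in
        (even k \<and> Poly_Mapping.lookup p k < Poly_Mapping.lookup q k) \<or> (odd k \<and> Poly_Mapping.lookup p k > Poly_Mapping.lookup q k)))"

definition prof_le :: "prof \<Rightarrow> prof \<Rightarrow> bool" where
  "prof_le p q \<longleftrightarrow> p = q \<or> prof_less p q"

definition max_prof :: "prof set \<Rightarrow> prof" where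
  "max_prof A = (THE p. p \<in> A \<and> (\<forall>q\<in>A. prof_le q p))"

definition min_prof :: "prof set \<Rightarrow> prof" where
  "min_prof A = (THE p. p \<in> A \<and> (\<forall>q\<in>A. prof_le p q))"

definition path_prof :: "('v \<Rightarrow> nat) \<Rightarrow> 'v option list \<Rightarrow> prof" where
  "path_prof c xs = Fin (sum_list (map (\<lambda>x. Poly_Mapping.single (c (the x)) 1) (filter (\<lambda>x. x \<noteq> None) xs)))"

definition inf_won :: "('v \<Rightarrow> nat) \<Rightarrow> (nat \<Rightarrow> 'v option) \<Rightarrow> bool" where
  "inf_won c f \<longleftrightarrow> even (Max {k. \<exists>\<^sub>\<infinity> i. c (the (f i)) = k})"

definition play_profiles :: "('v \<Rightarrow> nat) \<Rightarrow> ('v option \<times> 'v option) set \<Rightarrow> 'v option \<Rightarrow> prof set" where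
  "play_profiles c F s = path_prof c ` fin_plays F s
     \<union> (\<lambda>f. if inf_won c f then PosInf else NegInf) ` inf_plays F s"

definition valuation :: "'v set \<Rightarrow> ('v \<times> 'v) set \<Rightarrow> ('v \<Rightarrow> nat) \<Rightarrow> ('v \<Rightarrow> nat)
    \<Rightarrow> ('v option \<times> 'v option) set \<Rightarrow> 'v option \<Rightarrow> prof" where
  "valuation V E owner c \<sigma> s = (case s of None \<Rightarrow> Fin 0
     | Some _ \<Rightarrow> min_prof {max_prof (play_profiles c (\<sigma> \<union> \<tau>) s) | \<tau>. strategy1 V E owner \<tau>})"

definition reasonable :: "'v set \<Rightarrow> ('v \<times> 'v) set \<Rightarrow> ('v \<Rightarrow> nat) \<Rightarrow> ('v \<Rightarrow> nat)
    \<Rightarrow> ('v option \<times> 'v option) set \<Rightarrow> bool" where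
  "reasonable V E owner c \<sigma> \<longleftrightarrow>
     (\<forall>vs. vs \<noteq> [] \<and> (\<forall>i<length vs. (Some (vs ! i), Some (vs ! ((i + 1) mod length vs))) \<in> \<sigma> \<union> E1 V E owner)
        \<longrightarrow> even (Max (c ` set vs)))"

end

theory Submission
  imports Defs "HOL-Library.Infinite_Set"
begin

text \<open>Fix a strategy \<open>\<tau>\<close> of player 1. Every play of \<open>\<sigma>\<^sub>a \<union> \<tau>\<close> is a play of
  \<open>\<sigma>\<^sub>b \<union> \<tau>\<close>: the edges only grow, and a vertex without successor under \<open>\<sigma>\<^sub>a \<union> \<tau>\<close>
  has none under \<open>\<sigma>\<^sub>b \<union> \<tau>\<close> either, because every player-0 strategy moves from every
  player-0 vertex. So the set of play profiles only grows. For a reasonable strategy this set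
  has a greatest element: an infinite play is won, because the largest colour it sees infinitely
  often is the largest colour of a cycle in a finite graph whose cycles are all even-dominated,
  so its profile is \<open>\<infinity>\<close>; and without infinite plays no path repeats a vertex, so there are
  only finitely many plays. Hence the best profile against each \<open>\<tau>\<close> can only increase, and so
  does the minimum over all \<open>\<tau>\<close>.\<close>

section \<open>The order on colour profiles\<close>

definition lex_less_at :: "nat \<Rightarrow> (nat \<Rightarrow>\<^sub>0 int) \<Rightarrow> (nat \<Rightarrow>\<^sub>0 int) \<Rightarrow> bool" where
  "lex_less_at k p q \<longleftrightarrow>
     (if even k then Poly_Mapping.lookup p k < Poly_Mapping.lookup q k
      else Poly_Mapping.lookup q k < Poly_Mapping.lookup p k)"

lemma Max_differing_eqI:
  fixes p q :: "nat \<Rightarrow>\<^sub>0 int"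
  assumes "Poly_Mapping.lookup p k \<noteq> Poly_Mapping.lookup q k"
    and "\<forall>j>k. Poly_Mapping.lookup p j = Poly_Mapping.lookup q j"
  shows "Max {j. Poly_Mapping.lookup p j \<noteq> Poly_Mapping.lookup q j} = k"
proof (rule Max_eqI)
  have "{j. Poly_Mapping.lookup p j \<noteq> Poly_Mapping.lookup q j} \<subseteq> {..k}"
    using assms(2) by (auto simp: not_less[symmetric])
  then show "finite {j. Poly_Mapping.lookup p j \<noteq> Poly_Mapping.lookup q j}"
    by (rule finite_subset) simp
next
  fix j assume "j \<in> {j. Poly_Mapping.lookup p j \<noteq> Poly_Mapping.lookup q j}"
  then show "j \<le> k" using assms(2) by (auto simp: not_less[symmetric])
qed (use assms(1) in simp)

lemma highest_difference_exists:
  fixes p q :: "nat \<Rightarrow>\<^sub>0 int"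
  assumes "p \<noteq> q"
  shows "\<exists>k. Poly_Mapping.lookup p k \<noteq> Poly_Mapping.lookup q k
           \<and> (\<forall>j>k. Poly_Mapping.lookup p j = Poly_Mapping.lookup q j)"
proof -
  define D where "D = {j. Poly_Mapping.lookup p j \<noteq> Poly_Mapping.lookup q j}"
  have "D \<subseteq> Poly_Mapping.keys p \<union> Poly_Mapping.keys q"
    unfolding D_def by (auto simp: in_keys_iff)
  then have "finite D" by (rule finite_subset) simp
  moreover have "D \<noteq> {}" using assms unfolding D_def by (auto intro: poly_mapping_eqI)
  ultimately have "Max D \<in> D" by (rule Max_in)
  show ?thesis
  proof (intro exI conjI allI impI)
    show "Poly_Mapping.lookup p (Max D) \<noteq> Poly_Mapping.lookup q (Max D)"
      using \<open>Max D \<in> D\<close> by (simp add: D_def)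
  next
    fix j assume "Max D < j"
    then have "j \<notin> D" using Max_ge[OF \<open>finite D\<close>, of j] by linarith
    then show "Poly_Mapping.lookup p j = Poly_Mapping.lookup q j" by (simp add: D_def)
  qed
qed

lemma prof_less_Fin_iff:
  "prof_less (Fin p) (Fin q) \<longleftrightarrow>
     (\<exists>k. lex_less_at k p q \<and> (\<forall>j>k. Poly_Mapping.lookup p j = Poly_Mapping.lookup q j))"
  (is "_ \<longleftrightarrow> (\<exists>k. ?top k)")
proof
  assume less: "prof_less (Fin p) (Fin q)"
  then have "p \<noteq> q" by simp
  then obtain k where k: "Poly_Mapping.lookup p k \<noteq> Poly_Mapping.lookup q k"
    "\<forall>j>k. Poly_Mapping.lookup p j = Poly_Mapping.lookup q j"
    using highest_difference_exists by blast
  from less have "lex_less_at k p q"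
    unfolding prof_less.simps Max_differing_eqI[OF k] lex_less_at_def Let_def by auto
  with k(2) show "\<exists>k. ?top k" by blast
next
  assume "\<exists>k. ?top k"
  then obtain k where k: "lex_less_at k p q" "\<forall>j>k. Poly_Mapping.lookup p j = Poly_Mapping.lookup q j"
    by blast
  then have "Poly_Mapping.lookup p k \<noteq> Poly_Mapping.lookup q k"
    by (auto simp: lex_less_at_def split: if_splits)
  then have "p \<noteq> q" and "Max {j. Poly_Mapping.lookup p j \<noteq> Poly_Mapping.lookup q j} = k"
    using k(2) by (auto intro: Max_differing_eqI)
  with k(1) show "prof_less (Fin p) (Fin q)"
    unfolding prof_less.simps lex_less_at_def Let_def by (simp split: if_splits)
qed

declare prof_less.simps(5)[simp del]

lemma prof_less_irrefl: "\<not> prof_less p p"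
  by (cases p) (simp_all add: prof_less_Fin_iff lex_less_at_def)

lemma prof_less_Fin_trans:
  assumes "prof_less (Fin a) (Fin b)" and "prof_less (Fin b) (Fin e)"
  shows "prof_less (Fin a) (Fin e)"
proof -
  obtain k1 where k1: "lex_less_at k1 a b" "\<forall>j>k1. Poly_Mapping.lookup a j = Poly_Mapping.lookup b j"
    using assms(1) unfolding prof_less_Fin_iff by blast
  obtain k2 where k2: "lex_less_at k2 b e" "\<forall>j>k2. Poly_Mapping.lookup b j = Poly_Mapping.lookup e j"
    using assms(2) unfolding prof_less_Fin_iff by blast
  have "lex_less_at (max k1 k2) a e"
  proof (cases k1 k2 rule: linorder_cases)
    case less
    with k2(1) show ?thesis by (simp add: k1(2) lex_less_at_def max_def)
  next
    case equal
    with k1(1) k2(1) show ?thesis by (auto simp: lex_less_at_def split: if_splits)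
  next
    case greater
    with k1(1) show ?thesis by (simp add: k2(2)[rule_format, symmetric] lex_less_at_def max_def)
  qed
  moreover have "\<forall>j>max k1 k2. Poly_Mapping.lookup a j = Poly_Mapping.lookup e j"
    using k1(2) k2(2) by simp
  ultimately show ?thesis
    unfolding prof_less_Fin_iff by (intro exI[of _ "max k1 k2"] conjI)
qed

lemma prof_less_trans: "prof_less p q \<Longrightarrow> prof_less q r \<Longrightarrow> prof_less p r"
  by (cases p; cases q; cases r) (simp_all, blast intro: prof_less_Fin_trans)

lemma prof_less_asym: "prof_less p q \<Longrightarrow> \<not> prof_less q p"
  using prof_less_trans[of p q p] prof_less_irrefl[of p] by blast

lemma prof_less_Fin_total:
  assumes "a \<noteq> b"
  shows "prof_less (Fin a) (Fin b) \<or> prof_less (Fin b) (Fin a)"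
proof -
  obtain k where k: "Poly_Mapping.lookup a k \<noteq> Poly_Mapping.lookup b k"
    "\<forall>j>k. Poly_Mapping.lookup a j = Poly_Mapping.lookup b j"
    using highest_difference_exists[OF assms] by blast
  from k(2) have k2: "\<forall>j>k. Poly_Mapping.lookup b j = Poly_Mapping.lookup a j"
    by simp
  from k(1) have "lex_less_at k a b \<or> lex_less_at k b a"
    by (auto simp: lex_less_at_def)
  then show ?thesis
  proof
    assume "lex_less_at k a b"
    with k(2) show ?thesis unfolding prof_less_Fin_iff by blast
  next
    assume "lex_less_at k b a"
    with k2 show ?thesis unfolding prof_less_Fin_iff by blast
  qed
qed

lemma prof_less_total: "p \<noteq> q \<Longrightarrow> prof_less p q \<or> prof_less q p"
  by (cases p; cases q) (simp_all add: prof_less_Fin_total)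

instantiation prof :: linorder
begin

definition less_eq_prof :: "prof \<Rightarrow> prof \<Rightarrow> bool" where
  "less_eq_prof = prof_le"

definition less_prof :: "prof \<Rightarrow> prof \<Rightarrow> bool" where
  "less_prof = prof_less"

instance proof
  fix x y z :: prof
  show "x < y \<longleftrightarrow> x \<le> y \<and> \<not> y \<le> x"
    unfolding less_eq_prof_def less_prof_def prof_le_def
    using prof_less_asym[of x y] prof_less_irrefl[of x] by auto
  show "x \<le> x"
    unfolding less_eq_prof_def prof_le_def by simp
  show "x \<le> y \<Longrightarrow> y \<le> z \<Longrightarrow> x \<le> z"
    unfolding less_eq_prof_def prof_le_def using prof_less_trans[of x y z] by auto
  show "x \<le> y \<Longrightarrow> y \<le> x \<Longrightarrow> x = y"
    unfolding less_eq_prof_def prof_le_def using prof_less_asym[of x y] by auto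
  show "x \<le> y \<or> y \<le> x"
    unfolding less_eq_prof_def prof_le_def using prof_less_total[of x y] by auto
qed

end

lemma prof_le_iff_le: "prof_le p q \<longleftrightarrow> p \<le> q"
  by (simp add: less_eq_prof_def)

lemma max_prof_eqI:
  assumes "p \<in> A" and "\<And>q. q \<in> A \<Longrightarrow> q \<le> p"
  shows "max_prof A = p"
  unfolding max_prof_def prof_le_iff_le
  by (rule the_equality) (use assms in \<open>auto intro: antisym\<close>)

lemma max_prof_mono:
  assumes "A \<subseteq> B" and "\<exists>p\<in>A. \<forall>q\<in>A. q \<le> p" and "\<exists>p\<in>B. \<forall>q\<in>B. q \<le> p"
  shows "max_prof A \<le> max_prof B"
proof -
  obtain p where p: "p \<in> A" "\<forall>q\<in>A. q \<le> p" using assms(2) by blast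
  obtain p' where p': "p' \<in> B" "\<forall>q\<in>B. q \<le> p'" using assms(3) by blast
  have "max_prof A = p" using p by (intro max_prof_eqI) auto
  moreover have "max_prof B = p'" using p' by (intro max_prof_eqI) auto
  ultimately show ?thesis using p(1) p'(2) assms(1) by auto
qed

lemma min_prof_eq_Min:
  assumes "finite A" and "A \<noteq> {}"
  shows "min_prof A = Min A"
  unfolding min_prof_def prof_le_iff_le
proof (rule the_equality)
  show "Min A \<in> A \<and> (\<forall>q\<in>A. Min A \<le> q)" using assms by simp
next
  fix p assume "p \<in> A \<and> (\<forall>q\<in>A. p \<le> q)"
  then show "p = Min A" using assms(1) by (intro Min_eqI[symmetric]) auto
qed

section \<open>Plays in a finite graph\<close>

definition path :: "('a \<times> 'a) set \<Rightarrow> 'a \<Rightarrow> 'a list \<Rightarrow> bool" where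
  "path F s xs \<longleftrightarrow> xs \<noteq> [] \<and> hd xs = s \<and> (\<forall>i. Suc i < length xs \<longrightarrow> (xs ! i, xs ! Suc i) \<in> F)"

lemma fin_plays_iff: "xs \<in> fin_plays F s \<longleftrightarrow> path F s xs \<and> last xs \<notin> Domain F"
  by (auto simp: fin_plays_def path_def)

lemma path_snoc:
  assumes "path F s xs" and "(last xs, y) \<in> F"
  shows "path F s (xs @ [y])"
  unfolding path_def
proof (intro conjI allI impI)
  fix i assume i: "Suc i < length (xs @ [y])"
  show "((xs @ [y]) ! i, (xs @ [y]) ! Suc i) \<in> F"
  proof (cases "Suc i < length xs")
    case True
    then show ?thesis using assms(1) by (simp add: path_def nth_append)
  next
    case False
    with i have "i = length xs - 1" by simp
    with assms show ?thesis by (auto simp: path_def nth_append last_conv_nth)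
  qed
qed (use assms(1) in \<open>simp_all add: path_def\<close>)

lemma set_path_subset:
  assumes "path F s xs"
  shows "set xs \<subseteq> insert s (Range F)"
proof
  fix x assume "x \<in> set xs"
  then obtain i where i: "i < length xs" "x = xs ! i" by (auto simp: in_set_conv_nth)
  show "x \<in> insert s (Range F)"
  proof (cases i)
    case 0
    then show ?thesis using assms i by (auto simp: path_def hd_conv_nth[symmetric])
  next
    case (Suc j)
    then show ?thesis using assms i unfolding path_def by blast
  qed
qed

lemma path_distinct:
  assumes "path F s xs" and "inf_plays F s = {}"
  shows "distinct xs"
proof (rule ccontr)
  assume "\<not> distinct xs"
  then obtain i j where ij: "i < j" "j < length xs" "xs ! i = xs ! j"
    unfolding distinct_conv_nth by (metis linorder_neqE_nat)
  \<comment> \<open>walk along \<open>xs\<close> and jump back from \<open>j - 1\<close> to \<open>i\<close>, looping forever\<close>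
  define next_index where "next_index m = (if Suc m = j then i else Suc m)" for m
  define f where "f n = xs ! (next_index ^^ n) 0" for n
  have below_j: "(next_index ^^ n) 0 < j" for n
    by (induction n) (use ij in \<open>auto simp: next_index_def\<close>)
  have "f \<in> inf_plays F s"
    unfolding inf_plays_def
  proof (intro CollectI conjI allI)
    show "f 0 = s" using assms(1) by (auto simp: f_def path_def hd_conv_nth[symmetric])
  next
    fix n
    let ?m = "(next_index ^^ n) 0"
    have "(xs ! ?m, xs ! Suc ?m) \<in> F"
      using assms(1) below_j[of n] ij(2) unfolding path_def by simp
    then show "(f n, f (Suc n)) \<in> F"
      using ij(3) by (cases "Suc ?m = j") (simp_all add: f_def next_index_def)
  qed
  with assms(2) show False by simp
qed

lemma length_path_le:
  assumes "finite F" and "inf_plays F s = {}" and "path F s xs"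
  shows "length xs \<le> card (insert s (Range F))"
proof -
  have "length xs = card (set xs)"
    using path_distinct[OF assms(3,2)] by (simp add: distinct_card)
  also have "\<dots> \<le> card (insert s (Range F))"
    using set_path_subset[OF assms(3)] assms(1) by (intro card_mono) (auto simp: finite_Range)
  finally show ?thesis .
qed

lemma finite_fin_plays:
  assumes "finite F" and "inf_plays F s = {}"
  shows "finite (fin_plays F s)"
proof (rule finite_subset)
  show "fin_plays F s \<subseteq> {xs. set xs \<subseteq> insert s (Range F) \<and> length xs \<le> card (insert s (Range F))}"
  proof
    fix xs assume "xs \<in> fin_plays F s"
    then have "path F s xs" by (simp add: fin_plays_iff)
    then have "set xs \<subseteq> insert s (Range F)" and "length xs \<le> card (insert s (Range F))"
      by (rule set_path_subset) (rule length_path_le[OF assms \<open>path F s xs\<close>])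
    then show "xs \<in> {xs. set xs \<subseteq> insert s (Range F) \<and> length xs \<le> card (insert s (Range F))}"
      by simp
  qed
  show "finite \<dots>"
    using assms(1) by (intro finite_lists_length_le) (simp add: finite_Range)
qed

lemma fin_plays_nonempty:
  assumes "finite F" and "inf_plays F s = {}"
  shows "fin_plays F s \<noteq> {}"
proof -
  have "path F s [s]" by (simp add: path_def)
  then obtain xs where xs: "path F s xs" and longest: "\<And>ys. path F s ys \<Longrightarrow> length ys \<le> length xs"
    using Lattices_Big.ex_has_greatest_nat[of "path F s" "[s]" length "Suc (card (insert s (Range F)))"]
      length_path_le[OF assms] by (metis less_Suc_eq_le)
  have "last xs \<notin> Domain F"
  proof
    assume "last xs \<in> Domain F"
    then obtain y where "(last xs, y) \<in> F" by blast
    from longest[OF path_snoc[OF xs this]] show False by simp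
  qed
  with xs show ?thesis by (auto simp: fin_plays_iff)
qed

lemma play_profiles_mono:
  assumes "F1 \<subseteq> F2" and "Domain F2 \<subseteq> Domain F1"
  shows "play_profiles c F1 s \<subseteq> play_profiles c F2 s"
proof -
  have "fin_plays F1 s \<subseteq> fin_plays F2 s"
  proof
    fix xs assume "xs \<in> fin_plays F1 s"
    then have "path F1 s xs" and "last xs \<notin> Domain F1" by (simp_all add: fin_plays_iff)
    then have "path F2 s xs" and "last xs \<notin> Domain F2"
      using assms by (auto simp: path_def)
    then show "xs \<in> fin_plays F2 s" by (simp add: fin_plays_iff)
  qed
  moreover have "inf_plays F1 s \<subseteq> inf_plays F2 s"
    using assms(1) by (auto simp: inf_plays_def)
  ultimately show ?thesis
    unfolding play_profiles_def by blast
qed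

section \<open>Cycles and infinite plays\<close>

definition is_cycle :: "('a \<times> 'a) set \<Rightarrow> 'a list \<Rightarrow> bool" where
  "is_cycle F xs \<longleftrightarrow> xs \<noteq> [] \<and> (\<forall>i<length xs. (xs ! i, xs ! ((i + 1) mod length xs)) \<in> F)"

definition even_dominated_cycles :: "('a \<times> 'a) set \<Rightarrow> ('a \<Rightarrow> nat) \<Rightarrow> bool" where
  "even_dominated_cycles F col \<longleftrightarrow> (\<forall>xs. is_cycle F xs \<longrightarrow> even (Max (col ` set xs)))"

lemma is_cycle_map_upt:
  assumes "\<And>n. (f n, f (Suc n)) \<in> F" and "a < b" and "f a = f b"
  shows "is_cycle F (map f [a..<b])"
  unfolding is_cycle_def
proof (intro conjI allI impI)
  fix i assume "i < length (map f [a..<b])"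
  then have i: "i < b - a" by simp
  have "map f [a..<b] ! ((i + 1) mod (b - a)) = f (Suc (a + i))"
  proof (cases "i + 1 < b - a")
    case True
    then show ?thesis by simp
  next
    case False
    with i have "i + 1 = b - a" and "Suc (a + i) = b" by simp_all
    with assms(2,3) show ?thesis by simp
  qed
  with i assms(1)[of "a + i"]
  show "(map f [a..<b] ! i, map f [a..<b] ! ((i + 1) mod length (map f [a..<b]))) \<in> F"
    by simp
qed (use assms(2) in simp)

lemma even_Max_infinitely_often:
  assumes fin: "finite (range f)" and step: "\<And>n. (f n, f (Suc n)) \<in> F"
    and even: "even_dominated_cycles F col"
  shows "even (Max {k. \<exists>\<^sub>\<infinity>n. col (f n) = k})"
proof -
  \<comment> \<open>From \<open>T\<close> on only colours in \<open>K\<close> occur; a vertex of colour \<open>Max K\<close> recurs after \<open>T\<close>,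
     and the cycle between two of its visits has maximal colour \<open>Max K\<close>.\<close>
  define K where "K = {k. \<exists>\<^sub>\<infinity>n. col (f n) = k}"
  have fin_col: "finite (col ` range f)" using fin by simp
  have "\<forall>k\<in>col ` range f - K. \<forall>\<^sub>\<infinity>n. col (f n) \<noteq> k"
    unfolding K_def by (auto simp: not_MOST)
  then have "\<forall>\<^sub>\<infinity>n. \<forall>k\<in>col ` range f - K. col (f n) \<noteq> k"
    using fin_col by (simp add: MOST_finite_Ball_distrib)
  then have "\<forall>\<^sub>\<infinity>n. col (f n) \<in> K"
    by (rule MOST_mono) auto
  then obtain T where T: "\<And>n. T \<le> n \<Longrightarrow> col (f n) \<in> K"
    unfolding MOST_nat_le by blast
  have "K \<subseteq> col ` range f"
    unfolding K_def by (auto dest: INFM_EX)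
  then have "finite K" using fin_col by (rule finite_subset)
  moreover have "K \<noteq> {}" using T[of T] by blast
  ultimately have "Max K \<in> K" by (rule Max_in)
  have "finite (f ` {n. col (f n) = Max K})"
    using fin by (rule finite_subset[rotated]) auto
  moreover from \<open>Max K \<in> K\<close> have "infinite {n. col (f n) = Max K}"
    unfolding K_def by (simp add: INFM_iff_infinite)
  ultimately obtain v where v: "v \<in> f ` {n. col (f n) = Max K}" "infinite (f -` {v})"
    by (rule inf_img_fin_domE)
  then have "\<exists>\<^sub>\<infinity>n. f n = v" by (simp add: INFM_iff_infinite vimage_def)
  then obtain a where a: "T \<le> a" "f a = v"
    unfolding INFM_nat_le by blast
  from \<open>\<exists>\<^sub>\<infinity>n. f n = v\<close> obtain b where b: "a < b" "f b = v"
    unfolding INFM_nat by blast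
  have "is_cycle F (map f [a..<b])"
    by (rule is_cycle_map_upt[where f = f, OF step b(1)]) (simp add: a(2) b(2))
  then have "even (Max (col ` set (map f [a..<b])))"
    using even unfolding even_dominated_cycles_def by blast
  moreover have "Max (col ` set (map f [a..<b])) = Max K"
  proof (rule Max_eqI)
    fix k assume "k \<in> col ` set (map f [a..<b])"
    then obtain n where "a \<le> n" "k = col (f n)" by auto
    with T a(1) have "k \<in> K" by simp
    then show "k \<le> Max K" using \<open>finite K\<close> by simp
  next
    show "Max K \<in> col ` set (map f [a..<b])"
      using v(1) a(2) b(1) by force
  qed simp
  ultimately show ?thesis unfolding K_def by simp
qed

lemma play_profiles_has_greatest:
  assumes "finite F" and "even_dominated_cycles F (\<lambda>x. c (the x))"
  shows "\<exists>p\<in>play_profiles c F s. \<forall>q\<in>play_profiles c F s. q \<le> p"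
proof (cases "inf_plays F s = {}")
  case True
  then have "play_profiles c F s = path_prof c ` fin_plays F s"
    by (simp add: play_profiles_def)
  moreover have "finite (fin_plays F s)" and "fin_plays F s \<noteq> {}"
    using assms(1) True by (rule finite_fin_plays, rule fin_plays_nonempty)
  ultimately show ?thesis
    by (intro bexI[of _ "Max (play_profiles c F s)"]) simp_all
next
  case False
  then obtain f where f: "f \<in> inf_plays F s" by blast
  then have step: "\<And>n. (f n, f (Suc n)) \<in> F" by (simp add: inf_plays_def)
  have "f n \<in> insert s (Range F)" for n
  proof (cases n)
    case 0
    with f show ?thesis by (simp add: inf_plays_def)
  next
    case (Suc m)
    with step[of m] show ?thesis by blast
  qed
  then have "range f \<subseteq> insert s (Range F)" by blast
  then have "finite (range f)"
    by (rule finite_subset) (simp add: finite_Range assms(1))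
  then have "inf_won c f"
    unfolding inf_won_def using step assms(2) by (rule even_Max_infinitely_often)
  with f have "PosInf \<in> play_profiles c F s"
    unfolding play_profiles_def by (intro UnI2 image_eqI[of _ _ f]) simp_all
  moreover have "q \<le> PosInf" for q
    by (cases q) (simp_all add: less_eq_prof_def prof_le_def)
  ultimately show ?thesis by blast
qed

section \<open>Strategies in the escape arena\<close>

lemma strategy_edges_source:
  assumes "strategy0 V E owner \<sigma>" and "strategy1 V E owner \<tau>" and "(x, y) \<in> \<sigma> \<union> \<tau>"
  shows "\<exists>u\<in>V. x = Some u"
  using assms unfolding strategy0_def strategy1_def E0_def E1_def by blast

lemma finite_escE:
  assumes "arena V E owner c d"
  shows "finite (escE V E owner)"
proof (rule finite_subset)
  show "escE V E owner \<subseteq> (\<lambda>(u, v). (Some u, Some v)) ` E \<union> (\<lambda>u. (Some u, None)) ` V"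
    unfolding escE_def by auto
  have "finite V" and "E \<subseteq> V \<times> V"
    using assms unfolding arena_def by simp_all
  then have "finite E" by (simp add: finite_subset)
  with \<open>finite V\<close> show "finite ((\<lambda>(u, v). (Some u, Some v)) ` E \<union> (\<lambda>u. (Some u, None)) ` V)"
    by simp
qed

lemma finite_strategy_edges:
  assumes "arena V E owner c d" and "strategy0 V E owner \<sigma>" and "strategy1 V E owner \<tau>"
  shows "finite (\<sigma> \<union> \<tau>)"
proof (rule finite_subset)
  show "\<sigma> \<union> \<tau> \<subseteq> escE V E owner"
    using assms(2,3) unfolding strategy0_def strategy1_def E0_def E1_def escE_def by blast
qed (rule finite_escE[OF assms(1)])

lemma finite_strategies1:
  assumes "arena V E owner c d"
  shows "finite {\<tau>. strategy1 V E owner \<tau>}"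
proof (rule finite_subset)
  show "{\<tau>. strategy1 V E owner \<tau>} \<subseteq> Pow (escE V E owner)"
    unfolding strategy1_def E1_def escE_def by blast
qed (simp add: finite_escE[OF assms])

lemma strategy1_E1:
  assumes "arena V E owner c d"
  shows "strategy1 V E owner (E1 V E owner)"
  using assms unfolding arena_def strategy1_def E1_def by blast

lemma Domain_strategy_edges_subset:
  assumes "strategy0 V E owner \<sigma>" and "strategy0 V E owner \<sigma>'" and "strategy1 V E owner \<tau>"
  shows "Domain (\<sigma>' \<union> \<tau>) \<subseteq> Domain (\<sigma> \<union> \<tau>)"
proof
  fix x assume "x \<in> Domain (\<sigma>' \<union> \<tau>)"
  then obtain y where "(x, y) \<in> \<sigma>' \<union> \<tau>" by blast
  then show "x \<in> Domain (\<sigma> \<union> \<tau>)"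
  proof
    assume "(x, y) \<in> \<sigma>'"
    then obtain u where "x = Some u" "u \<in> V" "owner u = 0"
      using assms(2) unfolding strategy0_def E0_def by blast
    with assms(1) show ?thesis unfolding strategy0_def by blast
  qed blast
qed

lemma reasonable_even_dominated_cycles:
  assumes "strategy0 V E owner \<sigma>" and "strategy1 V E owner \<tau>" and "reasonable V E owner c \<sigma>"
  shows "even_dominated_cycles (\<sigma> \<union> \<tau>) (\<lambda>x. c (the x))"
  unfolding even_dominated_cycles_def
proof (intro allI impI)
  fix xs assume cyc: "is_cycle (\<sigma> \<union> \<tau>) xs"
  \<comment> \<open>vertices on a cycle have successors, so none of them is the escape vertex \<open>None\<close>\<close>
  have some: "Some (the (xs ! i)) = xs ! i" if "i < length xs" for i
    using cyc that strategy_edges_source[OF assms(1,2)] unfolding is_cycle_def by fastforce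
  have "(Some (map the xs ! i), Some (map the xs ! ((i + 1) mod length (map the xs))))
          \<in> \<sigma> \<union> E1 V E owner" if "i < length (map the xs)" for i
  proof -
    from that have "0 < length xs" by (cases xs) simp_all
    then have "(i + 1) mod length xs < length xs" by simp
    with that cyc assms(2) show ?thesis
      unfolding is_cycle_def strategy1_def using some by fastforce
  qed
  moreover have "map the xs \<noteq> []" using cyc by (simp add: is_cycle_def)
  ultimately have "even (Max (c ` set (map the xs)))"
    using assms(3) unfolding reasonable_def by blast
  then show "even (Max ((\<lambda>x. c (the x)) ` set xs))"
    by (simp add: image_image)
qed

lemma Min_image_mono:
  fixes f g :: "'a \<Rightarrow> 'b::linorder"
  assumes "finite A" and "A \<noteq> {}" and "\<And>x. x \<in> A \<Longrightarrow> f x \<le> g x"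
  shows "Min (f ` A) \<le> Min (g ` A)"
  using assms by (auto simp: Min_le_iff)

lemma valuation_Some_eq_Min:
  assumes "arena V E owner c d"
  shows "valuation V E owner c \<sigma> (Some v) =
           Min ((\<lambda>\<tau>. max_prof (play_profiles c (\<sigma> \<union> \<tau>) (Some v))) ` {\<tau>. strategy1 V E owner \<tau>})"
proof -
  have "{max_prof (play_profiles c (\<sigma> \<union> \<tau>) (Some v)) | \<tau>. strategy1 V E owner \<tau>}
          = (\<lambda>\<tau>. max_prof (play_profiles c (\<sigma> \<union> \<tau>) (Some v))) ` {\<tau>. strategy1 V E owner \<tau>}"
    by blast
  moreover have "{\<tau>. strategy1 V E owner \<tau>} \<noteq> {}"
    using strategy1_E1[OF assms] by blast
  ultimately show ?thesis
    unfolding valuation_def using finite_strategies1[OF assms] by (simp add: min_prof_eq_Min)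
qed

lemma max_play_profile_mono:
  assumes "arena V E owner c d"
    and "strategy0 V E owner \<sigma>a" and "reasonable V E owner c \<sigma>a"
    and "strategy0 V E owner \<sigma>b" and "reasonable V E owner c \<sigma>b"
    and "\<sigma>a \<subseteq> \<sigma>b" and "strategy1 V E owner \<tau>"
  shows "max_prof (play_profiles c (\<sigma>a \<union> \<tau>) s) \<le> max_prof (play_profiles c (\<sigma>b \<union> \<tau>) s)"
proof (rule max_prof_mono)
  show "play_profiles c (\<sigma>a \<union> \<tau>) s \<subseteq> play_profiles c (\<sigma>b \<union> \<tau>) s"
    using assms(6) Domain_strategy_edges_subset[OF assms(2,4,7)] by (intro play_profiles_mono) auto
  show "\<exists>p\<in>play_profiles c (\<sigma>a \<union> \<tau>) s. \<forall>q\<in>play_profiles c (\<sigma>a \<union> \<tau>) s. q \<le> p"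
    using finite_strategy_edges[OF assms(1,2,7)] reasonable_even_dominated_cycles[OF assms(2,7,3)]
    by (rule play_profiles_has_greatest)
  show "\<exists>p\<in>play_profiles c (\<sigma>b \<union> \<tau>) s. \<forall>q\<in>play_profiles c (\<sigma>b \<union> \<tau>) s. q \<le> p"
    using finite_strategy_edges[OF assms(1,4,7)] reasonable_even_dominated_cycles[OF assms(4,7,5)]
    by (rule play_profiles_has_greatest)
qed

theorem mainTheorem12:
  fixes V :: "'v set" and E :: "('v \<times> 'v) set" and owner c :: "'v \<Rightarrow> nat" and d :: nat
    and \<sigma>a \<sigma>b :: "('v option \<times> 'v option) set"
  assumes "arena V E owner c d"
    and "strategy0 V E owner \<sigma>a" and "reasonable V E owner c \<sigma>a"
    and "strategy0 V E owner \<sigma>b" and "reasonable V E owner c \<sigma>b"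
    and "\<sigma>a \<subseteq> \<sigma>b"
  shows "\<forall>s \<in> insert None (Some ` V).
           prof_le (valuation V E owner c \<sigma>a s) (valuation V E owner c \<sigma>b s)"
proof
  fix s assume "s \<in> insert None (Some ` V)"
  show "prof_le (valuation V E owner c \<sigma>a s) (valuation V E owner c \<sigma>b s)"
  proof (cases s)
    case None
    then show ?thesis by (simp add: valuation_def prof_le_def)
  next
    case (Some v)
    have "max_prof (play_profiles c (\<sigma>a \<union> \<tau>) (Some v))
            \<le> max_prof (play_profiles c (\<sigma>b \<union> \<tau>) (Some v))"
      if "\<tau> \<in> {\<tau>. strategy1 V E owner \<tau>}" for \<tau>
      using assms that by (intro max_play_profile_mono) simp_all
    then show ?thesis
      unfolding Some valuation_Some_eq_Min[OF assms(1)] prof_le_iff_le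
      using finite_strategies1[OF assms(1)] strategy1_E1[OF assms(1)]
      by (intro Min_image_mono) auto
  qed
qed

end
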